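(* For every $u$, the triangle $T=P_1P_2P_3$ is inscribed in $\mathcal{E}$, has centroid $O$ (so $\mathcal{E}$ is its Steiner circumellipse), its three sides are tangent to the ellipse $x^2/a^2+y^2/b^2=1/4$ (its Steiner inellipse), and its area equals $\frac{3\sqrt3}{4}ab$. Hence, as $u$ varies, the triangles $T$ form a Poncelet family of constant area between $\mathcal{E}$ and the caustic $x^2/a^2+y^2/b^2=1/4$. Moreover, $M$ is the Steiner point of $T$.
   Context: Let $a>b>0$. Let $\mathcal{E}$ be the ellipse $x^2/a^2+y^2/b^2=1$ with center $O=(0,0)$, parametrized by $P(t)=(a\cos t,b\sin t)$. Fix $u\in\mathbb{R}$ and let $M=(a\cos u,b\sin u)$. For $i=1,2,3$ let $t_i=-u/3-2\pi(i-1)/3$ and $P_i=P(t_i)$ (the pre-images of the cusps of the negative pedal curve of $\mathcal{E}$ with respect to $M$). The Steiner point of a triangle is the fourth common point (counted with multiplicity) of its circumcircle and its Steiner circumellipse (the ellipse through the vertices centered at the centroid), besides the vertices. *)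

theory Defs
  imports "HOL-Analysis.Analysis" "HOL-Computational_Algebra.Polynomial"
begin

text \<open>Points of the plane are represented as complex numbers: (x,y) is Complex x y.\<close>

definition on_ellipse :: "real \<Rightarrow> real \<Rightarrow> real \<Rightarrow> complex \<Rightarrow> bool" where
  "on_ellipse a b k z \<longleftrightarrow> (Re z / a)^2 + (Im z / b)^2 = k"

definition side_tangent :: "real \<Rightarrow> real \<Rightarrow> real \<Rightarrow> complex \<Rightarrow> complex \<Rightarrow> bool" where
  "side_tangent a b k A B \<longleftrightarrow> A \<noteq> B \<and>
     (\<exists>!X. on_ellipse a b k X \<and> (\<exists>s::real. X = A + of_real s * (B - A))) \<and>
     (\<forall>X. on_ellipse a b k X \<and> (\<exists>s::real. X = A + of_real s * (B - A)) \<longrightarrow> X \<in> closed_segment A B)"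

definition tri_area :: "complex \<Rightarrow> complex \<Rightarrow> complex \<Rightarrow> real" where
  "tri_area A B C = \<bar>Im (cnj (B - A) * (C - A))\<bar> / 2"

text \<open>Every ellipse centred at G is {G + \<alpha> z + \<beta>/z : |z| = 1} with
  |\<alpha>| \<noteq> |\<beta>|, z = e^{it} being a regular parametrisation.  For the circle with centre ctr
  and radius R, the function |X(z) - ctr|^2 - R^2 multiplied by z^2 is (on |z| = 1) the polynomial
  (\<beta> + w z + \<alpha> z^2)(cnj \<alpha> + cnj w z + cnj \<beta> z^2) - R^2 z^2, where w = G - ctr; its roots
  (with multiplicity) are the parameters of the common points of circle and ellipse (with
  intersection multiplicity).  S is the Steiner point of the (nondegenerate) triangle ABC iff,
  for the Steiner circumellipse (centre = centroid G, through A, B, C) and the circumcircle,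
  this degree-4 polynomial has exactly the roots zA, zB, zC, zS (with multiplicity), where
  X zA = A, X zB = B, X zC = C, X zS = S.\<close>
definition steiner_point :: "complex \<Rightarrow> complex \<Rightarrow> complex \<Rightarrow> complex \<Rightarrow> bool" where
  "steiner_point A B C S \<longleftrightarrow>
     Im (cnj (B - A) * (C - A)) \<noteq> 0 \<and>
     (\<exists>ctr R \<alpha> \<beta> zA zB zC zS c.
        let G = (A + B + C) / 3; X = (\<lambda>z. G + \<alpha> * z + \<beta> / z); w = G - ctr in
        cmod \<alpha> \<noteq> cmod \<beta> \<and>
        cmod zA = 1 \<and> cmod zB = 1 \<and> cmod zC = 1 \<and> cmod zS = 1 \<and>
        A = X zA \<and> B = X zB \<and> C = X zC \<and> S = X zS \<and>
        cmod (A - ctr) = R \<and> cmod (B - ctr) = R \<and> cmod (C - ctr) = R \<and>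
        c \<noteq> 0 \<and>
        [:\<beta>, w, \<alpha>:] * [:cnj \<alpha>, cnj w, cnj \<beta>:] - monom (complex_of_real (R^2)) 2
          = smult c ([:-zA, 1:] * [:-zB, 1:] * [:-zC, 1:] * [:-zS, 1:]))"

end

theory Submission
  imports Defs
begin

text \<open>The point P(t) is the image of cis t under the linear map (x, y) \<mapsto> (a x, b y),
  which maps the unit circle onto the ellipse and the circle of radius 1/2 onto the caustic,
  preserves incidence and midpoints, and multiplies areas by a b.  The vertex parameters are
  z, z \<omega>, z \<omega>^2 with z = cis (-u/3) and \<omega> a primitive cube root of unity: an equilateral
  triangle inscribed in the unit circle, with centroid 0, area 3 sqrt 3 / 4 and sides touching the
  circle of radius 1/2 at their midpoints.
  On the unit circle P = \<alpha> v + \<beta>/v with \<alpha> = (a+b)/2, \<beta> = (a-b)/2, and the common points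
  of the ellipse and a circle are the roots of a quartic in v.  The vertex parameters are the
  roots of v^3 - z^3, so for a suitable circle the quartic is (v^3 - z^3)(v - \<zeta>) with
  \<zeta> = 1/z^3 = cis u, the parameter of M.\<close>

lemma mult_cnj_unit:
  assumes "cmod z = 1"
  shows "z * cnj z = 1"
  using complex_norm_square[of z] assms by simp

definition stretch :: "real \<Rightarrow> real \<Rightarrow> complex \<Rightarrow> complex" where
  "stretch a b z = Complex (a * Re z) (b * Im z)"

lemma stretch_affine:
  "stretch a b (z + of_real s * (w - z)) = stretch a b z + of_real s * (stretch a b w - stretch a b z)"
  by (simp add: stretch_def complex_eq_iff algebra_simps)

lemma stretch_add: "stretch a b (z + w) = stretch a b z + stretch a b w"
  by (simp add: stretch_def complex_eq_iff algebra_simps)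

lemma stretch_0 [simp]: "stretch a b 0 = 0"
  by (simp add: stretch_def complex_eq_iff)

lemma stretch_eq_iff:
  assumes "a \<noteq> 0" "b \<noteq> 0"
  shows "stretch a b z = stretch a b w \<longleftrightarrow> z = w"
  using assms by (auto simp: stretch_def complex_eq_iff)

lemma stretch_eq_mult_cnj: "stretch a b z = of_real ((a + b) / 2) * z + of_real ((a - b) / 2) * cnj z"
  by (simp add: stretch_def complex_eq_iff field_simps)

lemma stretch_unit_eq:
  assumes "cmod z = 1"
  shows "stretch a b z = of_real ((a + b) / 2) * z + of_real ((a - b) / 2) / z"
  unfolding divide_conv_cnj[OF assms] by (rule stretch_eq_mult_cnj)

lemma on_ellipse_stretch:
  assumes "a \<noteq> 0" "b \<noteq> 0"
  shows "on_ellipse a b k (stretch a b z) \<longleftrightarrow> cmod z ^ 2 = k"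
  using assms by (simp add: on_ellipse_def stretch_def cmod_power2)

lemma tri_area_stretch:
  "tri_area (stretch a b A) (stretch a b B) (stretch a b C) = \<bar>a * b\<bar> * tri_area A B C"
proof -
  have "Im (cnj (stretch a b B - stretch a b A) * (stretch a b C - stretch a b A))
      = a * b * Im (cnj (B - A) * (C - A))"
    by (simp add: stretch_def algebra_simps)
  then show ?thesis
    by (simp add: tri_area_def abs_mult)
qed

lemma norm_chord_point_square:
  assumes "cmod z = 1" "cmod w = 1" "Re (cnj z * w) = -1/2"
  shows "cmod (z + of_real s * (w - z)) ^ 2 = 1/4 + 3 * (s - 1/2) ^ 2"
proof -
  have "cmod (z + of_real s * (w - z)) ^ 2
      = (1 - s) ^ 2 * cmod z ^ 2 + s ^ 2 * cmod w ^ 2 + 2 * s * (1 - s) * Re (cnj z * w)"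
    unfolding cmod_power2 by (simp add: power2_eq_square algebra_simps)
  also have "\<dots> = (1 - s) ^ 2 + s ^ 2 - s * (1 - s)"
    using assms by simp
  also have "\<dots> = 1/4 + 3 * (s - 1/2) ^ 2"
    by (simp add: power2_eq_square algebra_simps)
  finally show ?thesis .
qed

lemma side_tangent_stretch:
  assumes "a \<noteq> 0" "b \<noteq> 0" "cmod z = 1" "cmod w = 1" "Re (cnj z * w) = -1/2"
  shows "side_tangent a b (1/4) (stretch a b z) (stretch a b w)"
proof -
  define A B where "A = stretch a b z" and "B = stretch a b w"
  have on_ellipse_iff: "on_ellipse a b (1/4) (A + of_real s * (B - A)) \<longleftrightarrow> s = 1/2" for s
    using norm_chord_point_square[OF assms(3-5), of s]
    by (simp add: A_def B_def on_ellipse_stretch[OF assms(1,2)] flip: stretch_affine)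
  have "z \<noteq> w"
  proof
    assume "z = w"
    then have "Re (cnj z * w) = cmod z ^ 2"
      unfolding cmod_power2 by (simp add: power2_eq_square)
    with assms(3,5) show False by simp
  qed
  then have "A \<noteq> B"
    by (simp add: A_def B_def stretch_eq_iff[OF assms(1,2)])
  have mid: "midpoint A B = A + of_real (1/2) * (B - A)"
    by (simp add: midpoint_def scaleR_conv_of_real field_simps)
  have "(on_ellipse a b (1/4) X \<and> (\<exists>s::real. X = A + of_real s * (B - A)))
      \<longleftrightarrow> X = midpoint A B" for X
  proof
    assume "on_ellipse a b (1/4) X \<and> (\<exists>s::real. X = A + of_real s * (B - A))"
    then obtain s where "X = A + of_real s * (B - A)" "on_ellipse a b (1/4) X"
      by blast
    with on_ellipse_iff have "s = 1/2"
      by blast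
    with \<open>X = A + of_real s * (B - A)\<close> mid show "X = midpoint A B"
      by simp
  next
    assume "X = midpoint A B"
    with mid have "X = A + of_real (1/2) * (B - A)"
      by simp
    with on_ellipse_iff[of "1/2"]
    show "on_ellipse a b (1/4) X \<and> (\<exists>s::real. X = A + of_real s * (B - A))"
      by blast
  qed
  with \<open>A \<noteq> B\<close> show ?thesis
    by (simp add: side_tangent_def A_def[symmetric] B_def[symmetric])
qed

definition cube_root_unity :: complex where
  "cube_root_unity = cis (- (2 * pi / 3))"

lemma cube_root_unity_eq: "cube_root_unity = Complex (-1/2) (- sqrt 3 / 2)"
  by (simp add: cube_root_unity_def complex_eq_iff cos_120 sin_120)

lemma norm_cube_root_unity [simp]: "cmod cube_root_unity = 1"
  by (simp add: cube_root_unity_def)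

lemma cube_root_unity_power2: "cube_root_unity ^ 2 = cnj cube_root_unity"
  by (simp add: cube_root_unity_eq complex_eq_iff power2_eq_square)

lemma cube_root_unity_sum: "1 + cube_root_unity + cube_root_unity ^ 2 = 0"
  unfolding cube_root_unity_power2 by (simp add: cube_root_unity_eq complex_eq_iff)

lemma Re_cnj_mult_unit:
  assumes "cmod z = 1"
  shows "Re (cnj (z * p) * (z * q)) = Re (cnj p * q)"
proof -
  have "cnj (z * p) * (z * q) = (z * cnj z) * (cnj p * q)"
    by (simp add: algebra_simps)
  also have "\<dots> = cnj p * q"
    unfolding mult_cnj_unit[OF assms] by simp
  finally show ?thesis
    by (rule arg_cong)
qed

lemma cube_roots_sum: "z + z * cube_root_unity + z * cube_root_unity ^ 2 = 0"
  using cube_root_unity_sum by (metis distrib_left mult_1_right mult_zero_right)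

lemma cube_roots_chords:
  assumes "cmod z = 1"
  shows "Re (cnj z * (z * cube_root_unity)) = -1/2"
    and "Re (cnj (z * cube_root_unity) * (z * cube_root_unity ^ 2)) = -1/2"
    and "Re (cnj (z * cube_root_unity ^ 2) * z) = -1/2"
  using Re_cnj_mult_unit[OF assms, of 1 cube_root_unity]
    Re_cnj_mult_unit[OF assms, of cube_root_unity "cube_root_unity ^ 2"]
    Re_cnj_mult_unit[OF assms, of "cube_root_unity ^ 2" 1]
  by (simp_all add: cube_root_unity_eq power2_eq_square)

lemma tri_area_cube_roots:
  assumes "cmod z = 1"
  shows "tri_area z (z * cube_root_unity) (z * cube_root_unity ^ 2) = 3 * sqrt 3 / 4"
proof -
  have "cnj (z * cube_root_unity - z) * (z * cube_root_unity ^ 2 - z)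
      = (z * cnj z) * (cnj (cube_root_unity - 1) * (cube_root_unity ^ 2 - 1))"
    by (simp add: algebra_simps)
  also have "\<dots> = cnj (cube_root_unity - 1) * (cube_root_unity ^ 2 - 1)"
    using mult_cnj_unit[OF assms] by simp
  finally show ?thesis
    by (simp add: tri_area_def cube_root_unity_power2 cube_root_unity_eq power2_eq_square)
qed

lemma poly_circle_ellipse_unit:
  fixes \<alpha> \<beta> w z :: complex and R :: real
  assumes "cmod z = 1"
  shows "poly ([:\<beta>, w, \<alpha>:] * [:cnj \<alpha>, cnj w, cnj \<beta>:] - monom (of_real (R^2)) 2) z
       = z^2 * of_real (cmod (w + \<alpha> * z + \<beta> / z) ^ 2 - R^2)"
proof -
  define V where "V = w + \<alpha> * z + \<beta> * cnj z"
  have unit: "z * cnj z = 1"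
    by (rule mult_cnj_unit[OF assms])
  have V: "V = w + \<alpha> * z + \<beta> / z"
    using assms by (simp add: V_def divide_conv_cnj)
  have factor1: "poly [:\<beta>, w, \<alpha>:] z = z * V"
    using unit by (simp add: V_def algebra_simps)
  have factor2: "poly [:cnj \<alpha>, cnj w, cnj \<beta>:] z = z * cnj V"
    using unit by (simp add: V_def algebra_simps)
  have "poly ([:\<beta>, w, \<alpha>:] * [:cnj \<alpha>, cnj w, cnj \<beta>:] - monom (of_real (R^2)) 2) z
      = z^2 * (V * cnj V - of_real (R^2))"
    unfolding poly_diff poly_mult poly_monom factor1 factor2
    by (simp add: power2_eq_square algebra_simps)
  also have "\<dots> = z^2 * of_real (cmod V ^ 2 - R^2)"
    by (simp flip: complex_norm_square)
  finally show ?thesis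
    unfolding V .
qed

lemma linear_factors_cube_roots:
  "[:-z, 1:] * [:-(z * cube_root_unity), 1:] * [:-(z * cube_root_unity ^ 2), 1:] = [:-(z ^ 3), 0, 0, 1:]"
proof -
  have sq: "cube_root_unity * (cube_root_unity * x) = - x - cube_root_unity * x" for x
    using arg_cong[OF cube_root_unity_sum, of "\<lambda>y. y * x"]
    by (simp add: power2_eq_square eq_neg_iff_add_eq_0 algebra_simps)
  show ?thesis
    by (simp add: power2_eq_square power3_eq_cube algebra_simps sq)
qed

lemma steiner_point_intro:
  fixes A B C S ctr \<alpha> \<beta> zA zB zC zS c :: complex and R :: real
  defines "G \<equiv> (A + B + C) / 3"
  assumes "Im (cnj (B - A) * (C - A)) \<noteq> 0"
    and "cmod \<alpha> \<noteq> cmod \<beta>" "R \<ge> 0" "c \<noteq> 0"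
    and "cmod zA = 1" "cmod zB = 1" "cmod zC = 1" "cmod zS = 1"
    and "A = G + \<alpha> * zA + \<beta> / zA" "B = G + \<alpha> * zB + \<beta> / zB"
    and "C = G + \<alpha> * zC + \<beta> / zC" "S = G + \<alpha> * zS + \<beta> / zS"
    and quartic: "[:\<beta>, G - ctr, \<alpha>:] * [:cnj \<alpha>, cnj (G - ctr), cnj \<beta>:] - monom (of_real (R^2)) 2
       = smult c ([:-zA, 1:] * [:-zB, 1:] * [:-zC, 1:] * [:-zS, 1:])"
  shows "steiner_point A B C S"
proof -
  have on_circle: "cmod (G + \<alpha> * z + \<beta> / z - ctr) = R"
    if "cmod z = 1" "z \<in> {zA, zB, zC}" for z
  proof -
    have root: "poly [:-y, 1:] y = 0" for y :: complex
      by simp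
    have "z^2 * of_real (cmod ((G - ctr) + \<alpha> * z + \<beta> / z) ^ 2 - R^2)
        = poly (smult c ([:-zA, 1:] * [:-zB, 1:] * [:-zC, 1:] * [:-zS, 1:])) z"
      unfolding quartic[symmetric] by (rule poly_circle_ellipse_unit[OF that(1), symmetric])
    also have "\<dots> = 0"
      using that(2) by (auto simp only: poly_smult poly_mult root mult_zero_left mult_zero_right)
    finally have "z^2 * of_real (cmod ((G - ctr) + \<alpha> * z + \<beta> / z) ^ 2 - R^2) = 0" .
    moreover have "z \<noteq> 0"
      using that(1) by auto
    ultimately have "cmod ((G - ctr) + \<alpha> * z + \<beta> / z) ^ 2 = R ^ 2"
      by (metis mult_eq_0_iff of_real_eq_0_iff power_not_zero right_minus_eq)
    with \<open>R \<ge> 0\<close> show ?thesis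
      by (simp add: power2_eq_iff_nonneg algebra_simps)
  qed
  show ?thesis
    unfolding steiner_point_def Let_def G_def[symmetric]
    using assms(2-) on_circle by blast
qed

lemma steiner_point_stretch_cube_roots:
  fixes z \<zeta> :: complex
  assumes "a > b" "b > 0" "cmod z = 1" "z ^ 3 * \<zeta> = 1"
  defines "A \<equiv> stretch a b z" and "B \<equiv> stretch a b (z * cube_root_unity)"
    and "C \<equiv> stretch a b (z * cube_root_unity ^ 2)"
  shows "steiner_point A B C (stretch a b \<zeta>)"
proof -
  define \<alpha> \<beta> :: real where "\<alpha> = (a + b) / 2" and "\<beta> = (a - b) / 2"
  \<comment> \<open>The circumcentre is \<open>- w\<close>, where w solves \<open>\<alpha> cnj w + \<beta> w = - \<alpha> \<beta> \<zeta>\<close>: this matches the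
     linear and cubic coefficients of the quartic.\<close>
  define k where "k = \<alpha> * \<beta> / (\<alpha>^2 - \<beta>^2)"
  define w :: complex where "w = of_real k * (\<beta> * \<zeta> - \<alpha> * cnj \<zeta>)"
  define R where "R = sqrt (\<alpha>^2 + \<beta>^2 + cmod w ^ 2)"
  have "\<alpha> > \<beta>" "\<beta> > 0"
    using assms(1,2) by (simp_all add: \<alpha>_def \<beta>_def)
  have "cmod \<zeta> = 1"
    using arg_cong[OF assms(4), of cmod] assms(3) by (simp add: norm_mult norm_power)
  have "z ^ 3 = cnj \<zeta>"
    using assms(4) mult_cnj_unit[OF \<open>cmod \<zeta> = 1\<close>]
    by (metis mult.assoc mult_1_left mult_1_right)
  from cube_roots_sum[of z] have centroid: "(A + B + C) / 3 = 0"
    by (simp add: A_def B_def C_def flip: stretch_add)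
  have stretch_unit: "stretch a b v = 0 + of_real \<alpha> * v + of_real \<beta> / v" if "cmod v = 1" for v
    using stretch_unit_eq[OF that] by (simp add: \<alpha>_def \<beta>_def)
  have "tri_area A B C = a * b * (3 * sqrt 3 / 4)"
    using assms(1-3) tri_area_stretch tri_area_cube_roots by (simp add: A_def B_def C_def)
  then have nondegenerate: "Im (cnj (B - A) * (C - A)) \<noteq> 0"
    using assms(1,2) by (auto simp: tri_area_def)
  have quartic: "[:of_real \<beta>, w, of_real \<alpha>:] * [:cnj (of_real \<alpha>), cnj w, cnj (of_real \<beta>):]
      - monom (of_real (R^2)) 2
      = smult (of_real (\<alpha> * \<beta>)) ([:-z, 1:] * [:-(z * cube_root_unity), 1:]
          * [:-(z * cube_root_unity ^ 2), 1:] * [:-\<zeta>, 1:])"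
  proof -
    have "k * (\<alpha>^2 - \<beta>^2) = \<alpha> * \<beta>"
      using \<open>\<alpha> > \<beta>\<close> \<open>\<beta> > 0\<close> by (simp add: k_def)
    then have k: "of_real k * (of_real \<alpha>^2 - of_real \<beta>^2) = (of_real (\<alpha> * \<beta>) :: complex)"
      by (metis of_real_diff of_real_mult of_real_power)
    have "of_real \<alpha> * w + of_real \<beta> * cnj w = of_real k * (of_real \<beta>^2 - of_real \<alpha>^2) * cnj \<zeta>"
      by (simp add: w_def algebra_simps power2_eq_square)
    also have "\<dots> = - of_real (\<alpha> * \<beta>) * cnj \<zeta>"
      using k by (simp add: algebra_simps)
    finally have h1: "of_real \<alpha> * w + of_real \<beta> * cnj w = - of_real (\<alpha> * \<beta>) * cnj \<zeta>" .
    have "of_real \<alpha> * cnj w + of_real \<beta> * w = of_real k * (of_real \<beta>^2 - of_real \<alpha>^2) * \<zeta>"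
      by (simp add: w_def algebra_simps power2_eq_square)
    also have "\<dots> = - of_real (\<alpha> * \<beta>) * \<zeta>"
      using k by (simp add: algebra_simps)
    finally have h2: "of_real \<alpha> * cnj w + of_real \<beta> * w = - of_real (\<alpha> * \<beta>) * \<zeta>" .
    have h3: "of_real (R^2) = of_real \<alpha>^2 + of_real \<beta>^2 + w * cnj w"
      by (simp add: R_def flip: complex_norm_square)
    show ?thesis
      unfolding linear_factors_cube_roots \<open>z ^ 3 = cnj \<zeta>\<close> h3
      using h1 h2 mult_cnj_unit[OF \<open>cmod \<zeta> = 1\<close>]
      by (simp add: numeral_2_eq_2 monom_Suc monom_0 algebra_simps)
  qed
  have "cmod (z * cube_root_unity) = 1" "cmod (z * cube_root_unity ^ 2) = 1"
    using assms(3) by (simp_all add: norm_mult norm_power)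
  then show ?thesis
    using assms(3) \<open>cmod \<zeta> = 1\<close> \<open>\<alpha> > \<beta>\<close> \<open>\<beta> > 0\<close> nondegenerate quartic
    by (intro steiner_point_intro[where \<alpha> = "of_real \<alpha>" and \<beta> = "of_real \<beta>" and ctr = "- w"
          and R = R and c = "of_real (\<alpha> * \<beta>)" and zA = z and zB = "z * cube_root_unity"
          and zC = "z * cube_root_unity ^ 2" and zS = \<zeta>])
      (simp_all only: centroid diff_0 minus_minus,
       simp_all add: A_def B_def C_def stretch_unit R_def)
qed

theorem mainTheorem10:
  fixes a b u :: real
  assumes "a > b" and "b > 0"
  defines "P \<equiv> (\<lambda>t. Complex (a * cos t) (b * sin t))"
      and "tt \<equiv> (\<lambda>i::nat. - u / 3 - 2 * pi * (real i - 1) / 3)"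
  shows "(\<forall>i\<in>{1,2,3}. on_ellipse a b 1 (P (tt i))) \<and>
         (P (tt 1) + P (tt 2) + P (tt 3)) / 3 = 0 \<and>
         side_tangent a b (1/4) (P (tt 1)) (P (tt 2)) \<and>
         side_tangent a b (1/4) (P (tt 2)) (P (tt 3)) \<and>
         side_tangent a b (1/4) (P (tt 3)) (P (tt 1)) \<and>
         tri_area (P (tt 1)) (P (tt 2)) (P (tt 3)) = 3 * sqrt 3 / 4 * a * b \<and>
         steiner_point (P (tt 1)) (P (tt 2)) (P (tt 3)) (P u)"
proof -
  define z where "z = cis (- u / 3)"
  have "a \<noteq> 0" "b \<noteq> 0"
    using assms(1,2) by auto
  have "cmod z = 1"
    by (simp add: z_def)
  have P: "P t = stretch a b (cis t)" for t
    by (simp add: P_def stretch_def)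
  have vertices: "cis (tt 1) = z" "cis (tt 2) = z * cube_root_unity"
    "cis (tt 3) = z * cube_root_unity ^ 2"
    by (simp_all add: tt_def z_def cube_root_unity_def power2_eq_square cis_mult field_simps)
  have "z ^ 3 * cis u = 1"
    unfolding z_def Complex.DeMoivre by (simp add: cis_mult)
  have "cmod (z * cube_root_unity) = 1" "cmod (z * cube_root_unity ^ 2) = 1"
    using \<open>cmod z = 1\<close> by (simp_all add: norm_mult norm_power)
  note side = side_tangent_stretch[OF \<open>a \<noteq> 0\<close> \<open>b \<noteq> 0\<close>]
  show ?thesis
    unfolding P vertices
  proof (intro conjI)
    show "\<forall>i\<in>{1,2,3}. on_ellipse a b 1 (stretch a b (cis (tt i)))"
      by (simp add: on_ellipse_stretch[OF \<open>a \<noteq> 0\<close> \<open>b \<noteq> 0\<close>])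
    show "(stretch a b z + stretch a b (z * cube_root_unity)
        + stretch a b (z * cube_root_unity ^ 2)) / 3 = 0"
      using cube_roots_sum[of z] by (simp flip: stretch_add)
    show "side_tangent a b (1/4) (stretch a b z) (stretch a b (z * cube_root_unity))"
      "side_tangent a b (1/4) (stretch a b (z * cube_root_unity)) (stretch a b (z * cube_root_unity ^ 2))"
      "side_tangent a b (1/4) (stretch a b (z * cube_root_unity ^ 2)) (stretch a b z)"
      using side \<open>cmod z = 1\<close> \<open>cmod (z * cube_root_unity) = 1\<close>
        \<open>cmod (z * cube_root_unity ^ 2) = 1\<close> cube_roots_chords[OF \<open>cmod z = 1\<close>]
      by blast+
    show "tri_area (stretch a b z) (stretch a b (z * cube_root_unity))
        (stretch a b (z * cube_root_unity ^ 2)) = 3 * sqrt 3 / 4 * a * b"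
      using assms(1,2) by (simp add: tri_area_stretch tri_area_cube_roots[OF \<open>cmod z = 1\<close>])
    show "steiner_point (stretch a b z) (stretch a b (z * cube_root_unity))
        (stretch a b (z * cube_root_unity ^ 2)) (stretch a b (cis u))"
      by (rule steiner_point_stretch_cube_roots[OF assms(1,2) \<open>cmod z = 1\<close> \<open>z ^ 3 * cis u = 1\<close>])
  qed
qed

end
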